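(* Let $p$ be an odd prime and let $P$ be the Paley matrix of order $p$. Then the $p^2\times p^2$ matrix \[H=P\otimes P+J\otimes I+\omega\, I\otimes J\] is a $BH(p^2,6)$ matrix, i.e. a complex Hadamard matrix of order $p^2$ all of whose entries are sixth roots of unity.
   Context: $\omega=e^{2\pi i/3}$. $I$ and $J$ denote the $p\times p$ identity and all-ones matrices, and $\otimes$ is the Kronecker product. The Paley matrix of order $p$ is the circulant matrix $P$ with $P_{i,j}=\chi(j-i)$ for $i,j\in\mathbb{Z}_p$, where $\chi(0)=0$, $\chi(k)=1$ if $k$ is a nonzero quadratic residue mod $p$ and $\chi(k)=-1$ otherwise. A complex Hadamard matrix of order $n$ is an $n\times n$ matrix with unimodular entries satisfying $HH^\ast=nI_n$; $BH(n,q)$ denotes such a matrix whose entries are $q$-th roots of unity. *)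

theory Defs
  imports "Jordan_Normal_Form.Schur_Decomposition" "HOL-Number_Theory.Number_Theory"
begin

text \<open>Kronecker product: entry ((i,k),(j,l)) of A (x) B is A(i,j) * B(k,l); the pair
  index (i,k) is encoded as i * dim_row B + k (resp. j * dim_col B + l).\<close>
definition kron :: "'a::times mat \<Rightarrow> 'a mat \<Rightarrow> 'a mat" where
  "kron A B = mat (dim_row A * dim_row B) (dim_col A * dim_col B)
     (\<lambda>(i,j). A $$ (i div dim_row B, j div dim_col B) * B $$ (i mod dim_row B, j mod dim_col B))"

definition ones_mat :: "nat \<Rightarrow> complex mat" where
  "ones_mat n = mat n n (\<lambda>_. 1)"

definition paley_mat :: "nat \<Rightarrow> complex mat" where
  "paley_mat p = mat p p (\<lambda>(i,j). of_int (Legendre (int j - int i) (int p)))"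

definition omega :: complex where
  "omega = cis (2 * pi / 3)"

definition complex_hadamard :: "nat \<Rightarrow> complex mat \<Rightarrow> bool" where
  "complex_hadamard n H \<longleftrightarrow> H \<in> carrier_mat n n \<and>
     (\<forall>i<n. \<forall>j<n. cmod (H $$ (i,j)) = 1) \<and>
     H * mat_adjoint H = of_nat n \<cdot>\<^sub>m 1\<^sub>m n"

definition butson_hadamard :: "nat \<Rightarrow> nat \<Rightarrow> complex mat \<Rightarrow> bool" where
  "butson_hadamard n q H \<longleftrightarrow> complex_hadamard n H \<and>
     (\<forall>i<n. \<forall>j<n. (H $$ (i,j)) ^ q = 1)"

end

theory Submission
  imports Defs
begin

text \<open>
  Entries: P has zero diagonal and entries \<plusminus>1 elsewhere, so every entry of H is one of
  1, -1, \<omega>, 1 + \<omega>; these are sixth roots of unity, hence of modulus 1.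

  Orthogonality: writing H = P \<otimes> P + J \<otimes> I + W \<otimes> J with W = \<omega> I, the mixed-product rule
  (A \<otimes> B)(C \<otimes> D)^* = (A C^*) \<otimes> (B D^*) expresses H H^* through the Gram matrices of
  the factors.  The only arithmetic input is the pair of Paley identities P J = 0 and
  P P^* = p I - J, i.e. \<Sum>_j \<chi>(j + b) = 0 and \<Sum>_j \<chi>(j + b) \<chi>(j + c) = -1 for b \<noteq> c mod p.
  The first follows by multiplying the summation variable by a non-residue.  For the
  second, the autocorrelation S(d) = \<Sum>_j \<chi>(j) \<chi>(j + d) is invariant under d \<mapsto> a d for
  units a, and \<Sum>_d S(d) = 0, so S(d) = -1 whenever d \<noteq> 0 mod p.
\<close>

section \<open>The quadratic character modulo an odd prime\<close>

lemma Legendre_cong: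
  assumes "[a = b] (mod m)"
  shows "Legendre a m = Legendre b m"
proof -
  have "QuadRes m a = QuadRes m b" "[a = 0] (mod m) = [b = 0] (mod m)"
    using assms unfolding QuadRes_def by (meson cong_sym cong_trans)+
  then show ?thesis
    unfolding Legendre_def by simp
qed

lemma Legendre_cong_add:
  "[a = b] (mod m) \<Longrightarrow> Legendre (a + c) m = Legendre (b + c) m"
  by (intro Legendre_cong cong_add cong_refl)

lemma Legendre_values: "Legendre a m \<in> {-1, 0, 1}"
  unfolding Legendre_def by simp

lemma Legendre_eq_0_iff: "Legendre a m = 0 \<longleftrightarrow> [a = 0] (mod m)"
  unfolding Legendre_def by simp

lemma Legendre_square: "\<not> [a = 0] (mod m) \<Longrightarrow> (Legendre a m)\<^sup>2 = 1"
  unfolding Legendre_def by simp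

text \<open>Multiplicativity follows from Euler's criterion: both sides are congruent
  modulo p and lie in the interval [-2, 2], which for p > 2
  contains only one multiple of p.\<close>
lemma Legendre_mult:
  assumes "prime p" "2 < p"
  shows "Legendre (a * b) (int p) = Legendre a (int p) * Legendre b (int p)"
proof -
  let ?d = "Legendre (a * b) (int p) - Legendre a (int p) * Legendre b (int p)"
  have "[Legendre (a * b) (int p) = Legendre a (int p) * Legendre b (int p)] (mod p)"
    using euler_criterion[OF assms, of "a * b"] cong_mult[OF euler_criterion[OF assms, of a]
        euler_criterion[OF assms, of b]]
    by (metis cong_sym cong_trans power_mult_distrib)
  then have "int p dvd ?d"
    by (simp add: cong_iff_dvd_diff)
  moreover have "\<bar>?d\<bar> \<le> 2"
    using Legendre_values[of "a * b" "int p"] Legendre_values[of a "int p"]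
      Legendre_values[of b "int p"] by auto
  ultimately have "?d = 0"
    using assms(2) dvd_imp_le_int[of ?d "int p"] by fastforce
  then show ?thesis by simp
qed

text \<open>A primitive root modulo an odd prime is a quadratic non-residue, since its
  order p - 1 does not divide (p - 1) div 2.\<close>
lemma nonresidue_exists:
  assumes "prime p" "odd p"
  obtains g where "Legendre g (int p) = -1"
proof -
  have p2: "2 < p"
    using assms prime_ge_2_nat[of p] by presburger
  obtain g where g: "residue_primroot p g"
    using prime_primitive_root_exists[of p] assms prime_gt_1_nat by blast
  have cop: "coprime p g" and ord: "ord p g = p - 1"
    using g assms by (auto simp: residue_primroot_def totient_prime)
  have "\<not> [int g = 0] (mod int p)"
  proof
    assume "[int g = 0] (mod int p)"
    then have "p dvd g"
      by (simp add: cong_0_iff)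
    with cop have "is_unit p"
      by (metis coprime_common_divisor dvd_refl)
    with assms(1) show False
      by simp
  qed
  moreover have "Legendre (int g) (int p) \<noteq> 1"
  proof
    assume "Legendre (int g) (int p) = 1"
    then have "[int g ^ ((p - 1) div 2) = 1] (mod int p)"
      using euler_criterion[OF assms(1) p2, of "int g"] by (simp add: cong_sym_eq)
    then have "[g ^ ((p - 1) div 2) = 1] (mod p)"
      by (metis cong_int_iff of_nat_1 of_nat_power)
    then have "p - 1 dvd (p - 1) div 2"
      using ord ord_divides by metis
    moreover have "0 < (p - 1) div 2" "(p - 1) div 2 < p - 1"
      using p2 by auto
    ultimately show False
      using dvd_imp_le[of "p - 1" "(p - 1) div 2"] by linarith
  qed
  ultimately have "Legendre (int g) (int p) = -1"
    using Legendre_values[of "int g" "int p"] Legendre_eq_0_iff by auto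
  then show ?thesis
    by (rule that)
qed

lemma sum_periodic_affine:
  fixes f :: "int \<Rightarrow> 'b::comm_monoid_add"
  assumes "0 < p" "coprime a (int p)"
    and periodic: "\<And>x y. [x = y] (mod int p) \<Longrightarrow> f x = f y"
  shows "(\<Sum>j<p. f (a * int j + b)) = (\<Sum>j<p. f (int j))"
proof -
  define \<sigma> where "\<sigma> j = nat ((a * int j + b) mod int p)" for j
  have "inj_on \<sigma> {..<p}"
  proof (rule inj_onI)
    fix j k assume "j \<in> {..<p}" "k \<in> {..<p}" "\<sigma> j = \<sigma> k"
    then have "[a * int j + b = a * int k + b] (mod int p)"
      using assms(1) by (simp add: \<sigma>_def cong_def nat_eq_iff)
    then have "[int j = int k] (mod int p)"
      using assms(2) by (metis cong_add_rcancel cong_mult_lcancel)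
    with \<open>j \<in> {..<p}\<close> \<open>k \<in> {..<p}\<close> show "j = k"
      by (simp add: cong_def)
  qed
  moreover have "\<sigma> ` {..<p} \<subseteq> {..<p}"
    using assms(1) by (auto simp: \<sigma>_def nat_less_iff)
  ultimately have perm: "\<sigma> ` {..<p} = {..<p}"
    by (simp add: endo_inj_surj)
  have "(\<Sum>j<p. f (int j)) = (\<Sum>j<p. f (int (\<sigma> j)))"
    using sum.reindex[OF \<open>inj_on \<sigma> {..<p}\<close>, of "\<lambda>j. f (int j)"] perm by simp
  also have "\<dots> = (\<Sum>j<p. f (a * int j + b))"
    using assms(1) by (intro sum.cong refl periodic) (simp add: \<sigma>_def cong_def)
  finally show ?thesis by simp
qed

context
  fixes p :: nat
  assumes prime: "prime p" and odd: "odd p"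
begin

lemma p_gt_2: "2 < p"
  using prime odd prime_ge_2_nat[of p] by presburger

lemma coprime_of_nonzero: "\<not> [a = 0] (mod int p) \<Longrightarrow> coprime a (int p)"
  using prime by (metis cong_0_iff coprime_commute prime_imp_coprime prime_nat_int_transfer)

lemma sum_Legendre_shift:
  fixes f :: "int \<Rightarrow> 'b::comm_monoid_add"
  assumes "\<And>x y. [x = y] (mod int p) \<Longrightarrow> f x = f y"
  shows "(\<Sum>j<p. f (int j + b)) = (\<Sum>j<p. f (int j))"
  using sum_periodic_affine[of p 1 f b] assms p_gt_2 by simp

text \<open>The quadratic character sums to zero over a full period: multiplying the
  variable by a non-residue g permutes the residues and changes the sign.\<close>
lemma sum_Legendre: "(\<Sum>j<p. Legendre (int j + b) (int p)) = 0"
proof -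
  obtain g where g: "Legendre g (int p) = -1"
    using nonresidue_exists[OF prime odd] by blast
  have "coprime g (int p)"
    using g by (intro coprime_of_nonzero) (simp add: Legendre_eq_0_iff[symmetric])
  then have "(\<Sum>j<p. Legendre (g * int j + 0) (int p)) = (\<Sum>j<p. Legendre (int j) (int p))"
    using p_gt_2 by (intro sum_periodic_affine) (simp_all add: Legendre_cong)
  moreover have "(\<Sum>j<p. Legendre (g * int j + 0) (int p)) = - (\<Sum>j<p. Legendre (int j) (int p))"
    using g Legendre_mult[OF prime p_gt_2] by (simp add: sum_negf)
  ultimately have "(\<Sum>j<p. Legendre (int j) (int p)) = 0"
    by simp
  then show ?thesis
    using sum_Legendre_shift[of "\<lambda>x. Legendre x (int p)" b] by (simp add: Legendre_cong)
qed

definition autocorr :: "int \<Rightarrow> int" where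
  "autocorr d = (\<Sum>j<p. Legendre (int j) (int p) * Legendre (int j + d) (int p))"

lemma autocorr_0: "autocorr 0 = int p - 1"
proof -
  have "Legendre (int j) (int p) * Legendre (int j) (int p) = 1" if "j \<in> {..<p} - {0}" for j
  proof -
    have "\<not> [int j = 0] (mod int p)"
      using that by (auto simp: cong_0_iff dest: nat_dvd_not_less)
    then show ?thesis
      using Legendre_square by (simp add: power2_eq_square)
  qed
  moreover have "autocorr 0 = (\<Sum>j\<in>{..<p} - {0}. Legendre (int j) (int p) * Legendre (int j) (int p))"
    unfolding autocorr_def using p_gt_2
    by (subst sum.remove[of _ 0]) (auto simp: Legendre_eq_0_iff)
  ultimately have "autocorr 0 = (\<Sum>j\<in>{..<p} - {0}. 1)"
    by simp
  then show ?thesis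
    using p_gt_2 by simp
qed

lemma autocorr_scale:
  assumes "\<not> [a = 0] (mod int p)"
  shows "autocorr (a * d) = autocorr d"
proof -
  have periodic: "Legendre x (int p) * Legendre (x + a * d) (int p) =
      Legendre y (int p) * Legendre (y + a * d) (int p)" if "[x = y] (mod int p)" for x y
    using that by (metis Legendre_cong Legendre_cong_add)
  have "autocorr (a * d) =
      (\<Sum>j<p. Legendre (a * int j + 0) (int p) * Legendre (a * int j + 0 + a * d) (int p))"
    unfolding autocorr_def using p_gt_2 coprime_of_nonzero[OF assms] periodic
    by (intro sum_periodic_affine[symmetric]) auto
  also have "\<dots> = (\<Sum>j<p. Legendre (a * int j) (int p) * Legendre (a * (int j + d)) (int p))"
    by (simp add: distrib_left)
  also have "\<dots> = (\<Sum>j<p. (Legendre a (int p))\<^sup>2 *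
      (Legendre (int j) (int p) * Legendre (int j + d) (int p)))"
    by (simp add: Legendre_mult[OF prime p_gt_2] power2_eq_square mult_ac)
  finally show ?thesis
    using Legendre_square[OF assms] by (simp add: autocorr_def)
qed

lemma sum_autocorr: "(\<Sum>d<p. autocorr (int d)) = 0"
proof -
  have "(\<Sum>d<p. autocorr (int d)) =
      (\<Sum>j<p. \<Sum>d<p. Legendre (int j) (int p) * Legendre (int d + int j) (int p))"
    unfolding autocorr_def by (subst sum.swap) (simp add: add.commute)
  also have "\<dots> = (\<Sum>j<p. Legendre (int j) (int p) * (\<Sum>d<p. Legendre (int d + int j) (int p)))"
    by (simp add: sum_distrib_left)
  finally show ?thesis
    by (simp add: sum_Legendre)
qed

lemma autocorr_nonzero:
  assumes "\<not> [d = 0] (mod int p)"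
  shows "autocorr d = -1"
proof -
  have unit: "autocorr (int k) = autocorr 1" if "k \<in> {..<p} - {0}" for k
    using autocorr_scale[of "int k" 1] that by (auto simp: cong_0_iff dest: nat_dvd_not_less)
  have "0 = (\<Sum>k<p. autocorr (int k))"
    using sum_autocorr by simp
  also have "\<dots> = autocorr 0 + (\<Sum>k\<in>{..<p} - {0}. autocorr (int k))"
    using p_gt_2 by (subst sum.remove[of _ 0]) auto
  also have "\<dots> = (int p - 1) * (1 + autocorr 1)"
    using unit p_gt_2 by (simp add: autocorr_0 of_nat_diff algebra_simps)
  finally have "autocorr 1 = -1"
    using p_gt_2 by simp
  then show ?thesis
    using autocorr_scale[OF assms, of 1] by simp
qed

lemma Legendre_correlation:
  "(\<Sum>j<p. Legendre (int j + b) (int p) * Legendre (int j + c) (int p)) =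
    (if [b = c] (mod int p) then int p - 1 else -1)"
proof -
  have "(\<Sum>j<p. Legendre (int j + b) (int p) * Legendre (int j + b + (c - b)) (int p)) =
      autocorr (c - b)"
    unfolding autocorr_def
    by (intro sum_Legendre_shift) (metis Legendre_cong Legendre_cong_add)
  moreover have "autocorr (c - b) = autocorr 0" if "[b = c] (mod int p)"
  proof -
    have "[c - b = 0] (mod int p)"
      using that by (simp add: cong_iff_dvd_diff dvd_diff_commute)
    then have "[int j + (c - b) = int j + 0] (mod int p)" for j
      by (intro cong_add cong_refl)
    then show ?thesis
      unfolding autocorr_def by (intro sum.cong refl arg_cong2[where f = "(*)"] Legendre_cong) auto
  qed
  moreover have "\<not> [c - b = 0] (mod int p)" if "\<not> [b = c] (mod int p)"
    using that by (simp add: cong_iff_dvd_diff cong_0_iff dvd_diff_commute)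
  ultimately show ?thesis
    using autocorr_0 autocorr_nonzero by auto
qed

end

section \<open>Adjoints and Kronecker products\<close>

lemma dim_mat_adjoint [simp]:
  fixes A :: "complex mat"
  shows "dim_row (mat_adjoint A) = dim_col A" "dim_col (mat_adjoint A) = dim_row A"
  unfolding mat_adjoint_def by simp_all

lemma mat_adjoint_carrier [simp]:
  fixes A :: "complex mat"
  shows "A \<in> carrier_mat n m \<Longrightarrow> mat_adjoint A \<in> carrier_mat m n"
  by auto

lemma index_mat_adjoint [simp]:
  fixes A :: "complex mat"
  shows "i < dim_col A \<Longrightarrow> j < dim_row A \<Longrightarrow> mat_adjoint A $$ (i, j) = cnj (A $$ (j, i))"
  unfolding mat_adjoint_def by (simp add: mat_of_rows_index)

lemma index_mult_adjoint:
  fixes A B :: "complex mat"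
  assumes "dim_col B = dim_col A" "i < dim_row A" "j < dim_row B"
  shows "(A * mat_adjoint B) $$ (i, j) = (\<Sum>t<dim_col A. A $$ (i, t) * cnj (B $$ (j, t)))"
  using assms by (simp add: scalar_prod_def atLeast0LessThan)

lemma mat_adjoint_add:
  fixes A B :: "complex mat"
  assumes "A \<in> carrier_mat n m" "B \<in> carrier_mat n m"
  shows "mat_adjoint (A + B) = mat_adjoint A + mat_adjoint B"
  using assms by (intro eq_matI) auto

lemma kron_carrier [simp]:
  "A \<in> carrier_mat n m \<Longrightarrow> B \<in> carrier_mat n' m' \<Longrightarrow> kron A B \<in> carrier_mat (n * n') (m * m')"
  unfolding kron_def by auto

lemma dim_kron [simp]:
  "dim_row (kron A B) = dim_row A * dim_row B" "dim_col (kron A B) = dim_col A * dim_col B"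
  unfolding kron_def by simp_all

lemma index_kron:
  assumes "i < dim_row A * dim_row B" "j < dim_col A * dim_col B"
  shows "kron A B $$ (i, j) =
    A $$ (i div dim_row B, j div dim_col B) * B $$ (i mod dim_row B, j mod dim_col B)"
  using assms unfolding kron_def by simp

lemma kron_smult_left:
  fixes A B :: "'a::semigroup_mult mat"
  shows "kron (c \<cdot>\<^sub>m A) B = c \<cdot>\<^sub>m kron A B"
  by (intro eq_matI) (auto simp: index_kron less_mult_imp_div_less mult.assoc)

lemma block_index_less:
  fixes a b m n :: nat
  assumes "a < m" "b < n"
  shows "a * n + b < m * n"
proof -
  have "a * n + b < (a + 1) * n"
    using assms(2) by simp
  also have "\<dots> \<le> m * n"
    using assms(1) by (intro mult_le_mono1) simp
  finally show ?thesis .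
qed

lemma sum_div_mod:
  fixes f :: "nat \<Rightarrow> 'a::comm_monoid_add"
  shows "(\<Sum>t<m * n. f t) = (\<Sum>a<m. \<Sum>b<n. f (a * n + b))"
proof -
  have "(\<Sum>t<m * n. f t) = (\<Sum>(a, b)\<in>{..<m} \<times> {..<n}. f (a * n + b))"
    by (rule sum.reindex_bij_witness[where i = "\<lambda>(a, b). a * n + b" and j = "\<lambda>t. (t div n, t mod n)"])
      (cases "n = 0"; auto simp: less_mult_imp_div_less block_index_less)+
  then show ?thesis
    by (simp add: sum.cartesian_product)
qed

lemma kron_mult_adjoint:
  fixes A B C D :: "complex mat"
  assumes "A \<in> carrier_mat n m" "C \<in> carrier_mat n m"
    and "B \<in> carrier_mat n' m'" "D \<in> carrier_mat n' m'"
  shows "kron A B * mat_adjoint (kron C D) = kron (A * mat_adjoint C) (B * mat_adjoint D)"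
proof (rule eq_matI)
  fix i j assume "i < dim_row (kron (A * mat_adjoint C) (B * mat_adjoint D))"
    "j < dim_col (kron (A * mat_adjoint C) (B * mat_adjoint D))"
  then have i: "i < n * n'" and j: "j < n * n'"
    using assms by auto
  then have "0 < n'" by (cases n') auto
  then have blocks: "i div n' < n" "j div n' < n" "i mod n' < n'" "j mod n' < n'"
    using i j by (auto simp: less_mult_imp_div_less)
  have "(kron A B * mat_adjoint (kron C D)) $$ (i, j) =
      (\<Sum>t<m * m'. kron A B $$ (i, t) * cnj (kron C D $$ (j, t)))"
    using assms i j by (subst index_mult_adjoint) auto
  also have "\<dots> = (\<Sum>a<m. \<Sum>b<m'. A $$ (i div n', a) * B $$ (i mod n', b) *
        cnj (C $$ (j div n', a) * D $$ (j mod n', b)))"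
    unfolding sum_div_mod using assms i j
    by (intro sum.cong refl) (auto simp: index_kron block_index_less)
  also have "\<dots> = (\<Sum>a<m. A $$ (i div n', a) * cnj (C $$ (j div n', a))) *
      (\<Sum>b<m'. B $$ (i mod n', b) * cnj (D $$ (j mod n', b)))"
    by (simp add: sum_product algebra_simps)
  also have "\<dots> = kron (A * mat_adjoint C) (B * mat_adjoint D) $$ (i, j)"
    using assms i j blocks by (simp add: index_kron index_mult_adjoint del: index_mult_mat(1))
  finally show "(kron A B * mat_adjoint (kron C D)) $$ (i, j) =
      kron (A * mat_adjoint C) (B * mat_adjoint D) $$ (i, j)" .
qed (use assms in auto)


lemma kron_sum3_gram_entry:
  fixes A1 A2 A3 B1 B2 B3 :: "complex mat"
  assumes "A1 \<in> carrier_mat n n" "A2 \<in> carrier_mat n n" "A3 \<in> carrier_mat n n"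
    and "B1 \<in> carrier_mat n n" "B2 \<in> carrier_mat n n" "B3 \<in> carrier_mat n n"
    and "r < n * n" "s < n * n"
  shows "((kron A1 B1 + kron A2 B2 + kron A3 B3) *
      mat_adjoint (kron A1 B1 + kron A2 B2 + kron A3 B3)) $$ (r, s) =
      kron (A1 * mat_adjoint A1) (B1 * mat_adjoint B1) $$ (r, s)
    + kron (A1 * mat_adjoint A2) (B1 * mat_adjoint B2) $$ (r, s)
    + kron (A1 * mat_adjoint A3) (B1 * mat_adjoint B3) $$ (r, s)
    + kron (A2 * mat_adjoint A1) (B2 * mat_adjoint B1) $$ (r, s)
    + kron (A2 * mat_adjoint A2) (B2 * mat_adjoint B2) $$ (r, s)
    + kron (A2 * mat_adjoint A3) (B2 * mat_adjoint B3) $$ (r, s)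
    + kron (A3 * mat_adjoint A1) (B3 * mat_adjoint B1) $$ (r, s)
    + kron (A3 * mat_adjoint A2) (B3 * mat_adjoint B2) $$ (r, s)
    + kron (A3 * mat_adjoint A3) (B3 * mat_adjoint B3) $$ (r, s)"
proof -
  have K: "kron A1 B1 \<in> carrier_mat (n * n) (n * n)" "kron A2 B2 \<in> carrier_mat (n * n) (n * n)"
    "kron A3 B3 \<in> carrier_mat (n * n) (n * n)"
    using assms by simp_all
  have adj: "mat_adjoint (kron A1 B1 + kron A2 B2 + kron A3 B3) =
      mat_adjoint (kron A1 B1) + mat_adjoint (kron A2 B2) + mat_adjoint (kron A3 B3)"
    using K by (simp add: mat_adjoint_add[where n = "n * n" and m = "n * n"] del: assoc_add_mat)
  show ?thesis
    unfolding adj using assms K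
    by (simp add: add_mult_distrib_mat[where nr = "n * n" and n = "n * n" and nc = "n * n"]
        mult_add_distrib_mat[where nr = "n * n" and n = "n * n" and nc = "n * n"]
        kron_mult_adjoint[where n = n and m = n and n' = n and m' = n] add_ac
        del: index_mult_mat(1))
qed

section \<open>The Paley matrix\<close>

lemma paley_carrier [simp]: "paley_mat p \<in> carrier_mat p p"
  unfolding paley_mat_def by simp

lemma dim_paley [simp]: "dim_row (paley_mat p) = p" "dim_col (paley_mat p) = p"
  unfolding paley_mat_def by simp_all

lemma index_paley:
  "i < p \<Longrightarrow> j < p \<Longrightarrow> paley_mat p $$ (i, j) = of_int (Legendre (int j - int i) (int p))"
  unfolding paley_mat_def by simp

lemma ones_carrier [simp]: "ones_mat n \<in> carrier_mat n n"
  unfolding ones_mat_def by simp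

lemma dim_ones [simp]: "dim_row (ones_mat n) = n" "dim_col (ones_mat n) = n"
  unfolding ones_mat_def by simp_all

lemma index_ones [simp]: "i < n \<Longrightarrow> j < n \<Longrightarrow> ones_mat n $$ (i, j) = 1"
  unfolding ones_mat_def by simp

lemma paley_diag: "i < p \<Longrightarrow> paley_mat p $$ (i, i) = 0"
  by (simp add: index_paley Legendre_eq_0_iff)

lemma paley_off_diag:
  assumes "i < p" "j < p" "i \<noteq> j"
  shows "paley_mat p $$ (i, j) \<in> {1, -1}"
proof -
  have "\<not> int p dvd int j - int i"
    using assms dvd_imp_le_int[of "int j - int i" "int p"] by auto
  then have "Legendre (int j - int i) (int p) \<noteq> 0"
    by (simp add: Legendre_eq_0_iff cong_0_iff)
  then show ?thesis
    using assms Legendre_values[of "int j - int i" "int p"] by (auto simp: index_paley)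
qed

lemma mat_adjoint_ones [simp]: "mat_adjoint (ones_mat n) = ones_mat n"
  by (intro eq_matI) simp_all

lemma mat_adjoint_one [simp]: "mat_adjoint (1\<^sub>m n :: complex mat) = 1\<^sub>m n"
  by (intro eq_matI) simp_all

lemma mat_adjoint_smult [simp]:
  fixes A :: "complex mat"
  shows "mat_adjoint (c \<cdot>\<^sub>m A) = cnj c \<cdot>\<^sub>m mat_adjoint A"
  by (intro eq_matI) simp_all

lemma ones_mult_ones: "ones_mat n * ones_mat n = of_nat n \<cdot>\<^sub>m ones_mat n"
  by (intro eq_matI) (simp_all add: scalar_prod_def)

context
  fixes p :: nat
  assumes prime: "prime p" and odd: "odd p"
begin

lemma paley_mult_adjoint_ones: "paley_mat p * mat_adjoint (ones_mat p) = 0\<^sub>m p p"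
proof (rule eq_matI)
  fix i j assume "i < dim_row (0\<^sub>m p p :: complex mat)" "j < dim_col (0\<^sub>m p p :: complex mat)"
  then have "i < p" "j < p" by simp_all
  then have "(paley_mat p * mat_adjoint (ones_mat p)) $$ (i, j) =
      of_int (\<Sum>t<p. Legendre (int t + - int i) (int p))"
    by (subst index_mult_adjoint) (simp_all add: index_paley)
  then show "(paley_mat p * mat_adjoint (ones_mat p)) $$ (i, j) = 0\<^sub>m p p $$ (i, j)"
    using \<open>i < p\<close> \<open>j < p\<close> by (simp only: sum_Legendre[OF prime odd]) simp
qed simp_all

lemma ones_mult_adjoint_paley: "ones_mat p * mat_adjoint (paley_mat p) = 0\<^sub>m p p"
proof (rule eq_matI)
  fix i j assume "i < dim_row (0\<^sub>m p p :: complex mat)" "j < dim_col (0\<^sub>m p p :: complex mat)"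
  then have "i < p" "j < p" by simp_all
  then have "(ones_mat p * mat_adjoint (paley_mat p)) $$ (i, j) =
      of_int (\<Sum>t<p. Legendre (int t + - int j) (int p))"
    by (subst index_mult_adjoint) (simp_all add: index_paley)
  then show "(ones_mat p * mat_adjoint (paley_mat p)) $$ (i, j) = 0\<^sub>m p p $$ (i, j)"
    using \<open>i < p\<close> \<open>j < p\<close> by (simp only: sum_Legendre[OF prime odd]) simp
qed simp_all

lemma paley_mult_adjoint:
  "paley_mat p * mat_adjoint (paley_mat p) = of_nat p \<cdot>\<^sub>m 1\<^sub>m p - ones_mat p"
proof (rule eq_matI)
  fix i j assume "i < dim_row (of_nat p \<cdot>\<^sub>m 1\<^sub>m p - ones_mat p :: complex mat)"
    "j < dim_col (of_nat p \<cdot>\<^sub>m 1\<^sub>m p - ones_mat p :: complex mat)"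
  then have ij: "i < p" "j < p" by simp_all
  then have "(paley_mat p * mat_adjoint (paley_mat p)) $$ (i, j) =
      of_int (\<Sum>t<p. Legendre (int t + - int i) (int p) * Legendre (int t + - int j) (int p))"
    by (subst index_mult_adjoint) (simp_all add: index_paley)
  also have "\<dots> = of_int (if [- int i = - int j] (mod int p) then int p - 1 else -1)"
    by (simp only: Legendre_correlation[OF prime odd])
  also have "[- int i = - int j] (mod int p) \<longleftrightarrow> i = j"
    using ij by (auto simp: cong_def zmod_zminus1_eq_if split: if_splits)
  finally show "(paley_mat p * mat_adjoint (paley_mat p)) $$ (i, j) =
      (of_nat p \<cdot>\<^sub>m 1\<^sub>m p - ones_mat p) $$ (i, j)"
    using ij by simp
qed simp_all

end

section \<open>The cube root of unity \<omega>\<close>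

lemma omega_eq: "omega = Complex (-1/2) (sqrt 3 / 2)"
  by (simp add: omega_def complex_eq_iff cos_120 sin_120)

lemma omega_mult_cnj: "omega * cnj omega = 1" "cnj omega * omega = 1"
  by (simp_all add: omega_eq complex_eq_iff power2_eq_square)

lemma omega_add_cnj: "omega + cnj omega = -1"
  by (simp add: omega_eq complex_eq_iff)

lemma omega_pow_6: "omega ^ 6 = 1"
proof -
  have "omega ^ 6 = cis (2 * pi * of_int 2)"
    unfolding omega_def DeMoivre by (simp add: field_simps)
  then show ?thesis
    by (simp del: of_int_numeral)
qed

lemma one_plus_omega_pow_6: "(1 + omega) ^ 6 = 1"
proof -
  have "1 + omega = cis (pi / 3)"
    by (simp add: omega_eq complex_eq_iff cos_60 sin_60)
  then show ?thesis
    by (simp add: DeMoivre)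
qed

section \<open>The matrix P \<otimes> P + J \<otimes> I + \<omega> I \<otimes> J\<close>

definition paley_bh_mat :: "nat \<Rightarrow> complex mat" where
  "paley_bh_mat p = kron (paley_mat p) (paley_mat p) + kron (ones_mat p) (1\<^sub>m p)
     + omega \<cdot>\<^sub>m kron (1\<^sub>m p) (ones_mat p)"

lemma paley_bh_carrier: "paley_bh_mat p \<in> carrier_mat (p * p) (p * p)"
  unfolding paley_bh_mat_def by simp

text \<open>Writing a row index as r = p a + b and a column index as s = p c + d, the entry
  is \<chi>(c - a) \<chi>(d - b) + [b = d] + \<omega> [a = c].\<close>
lemma paley_bh_entry:
  assumes "r < p * p" "s < p * p"
  shows "paley_bh_mat p $$ (r, s) \<in> {1, -1, omega, 1 + omega}"
proof -
  have "0 < p" using assms by (cases p) auto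
  then have blocks: "r div p < p" "s div p < p" "r mod p < p" "s mod p < p"
    using assms by (auto simp: less_mult_imp_div_less)
  then have entry: "paley_bh_mat p $$ (r, s) =
      paley_mat p $$ (r div p, s div p) * paley_mat p $$ (r mod p, s mod p)
      + (if r mod p = s mod p then 1 else 0) + omega * (if r div p = s div p then 1 else 0)"
    using assms by (simp add: paley_bh_mat_def index_kron)
  show ?thesis
  proof (cases "r div p = s div p")
    case True
    then show ?thesis
      using entry blocks by (simp add: paley_diag)
  next
    case False
    then show ?thesis
      using entry blocks paley_off_diag[of "r div p" p "s div p"]
        paley_off_diag[of "r mod p" p "s mod p"]
      by (cases "r mod p = s mod p") (auto simp: paley_diag)
  qed
qed

text \<open>Writing H = P\<otimes>P + J\<otimes>I + W\<otimes>J with W = \<omega> I, the mixed-product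
  rule turns each of the nine products into a Kronecker product of p \<times> p Gram matrices;
  with P J^* = J P^* = 0, P P^* = p I - J, J J^* = p J and W W^* = I they add up to
  (pI - J)\<otimes>(pI - J) + p J\<otimes>I + (\<omega> + cnj \<omega>) J\<otimes>J + p I\<otimes>J = p^2 I.\<close>
lemma paley_bh_gram:
  assumes "prime p" "odd p"
  shows "paley_bh_mat p * mat_adjoint (paley_bh_mat p) = of_nat (p * p) \<cdot>\<^sub>m 1\<^sub>m (p * p)"
proof -
  define P J I W where "P = paley_mat p" "J = ones_mat p" "I = (1\<^sub>m p :: complex mat)"
    "W = omega \<cdot>\<^sub>m (1\<^sub>m p :: complex mat)"
  have carriers: "P \<in> carrier_mat p p" "J \<in> carrier_mat p p" "I \<in> carrier_mat p p"
    "W \<in> carrier_mat p p"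
    by (simp_all add: P_J_I_W_def)
  have H: "paley_bh_mat p = kron P P + kron J I + kron W J"
    by (simp add: paley_bh_mat_def P_J_I_W_def kron_smult_left)
  have grams: "P * mat_adjoint P = of_nat p \<cdot>\<^sub>m I - J" "P * mat_adjoint J = 0\<^sub>m p p"
    "J * mat_adjoint P = 0\<^sub>m p p" "J * mat_adjoint J = of_nat p \<cdot>\<^sub>m J"
    "I * mat_adjoint I = I" "I * mat_adjoint J = J" "J * mat_adjoint I = J"
    "J * mat_adjoint W = cnj omega \<cdot>\<^sub>m J" "W * mat_adjoint J = omega \<cdot>\<^sub>m J"
    using assms unfolding P_J_I_W_def
    by (simp_all add: paley_mult_adjoint paley_mult_adjoint_ones[simplified]
        ones_mult_adjoint_paley ones_mult_ones
        mult_smult_distrib[where nr = p and n = p and nc = p]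
        mult_smult_assoc_mat[where nr = p and n = p and nc = p])
  have gram_W: "W * mat_adjoint W = I"
    unfolding P_J_I_W_def by (intro eq_matI) (auto simp: omega_mult_cnj mult.assoc[symmetric])
  show ?thesis
  proof (rule eq_matI)
    fix r s assume "r < dim_row (of_nat (p * p) \<cdot>\<^sub>m 1\<^sub>m (p * p) :: complex mat)"
      "s < dim_col (of_nat (p * p) \<cdot>\<^sub>m 1\<^sub>m (p * p) :: complex mat)"
    then have rs: "r < p * p" "s < p * p" by simp_all
    then have "0 < p" by (cases p) auto
    then have blocks: "r div p < p" "s div p < p" "r mod p < p" "s mod p < p"
      using rs by (auto simp: less_mult_imp_div_less)
    have "(paley_bh_mat p * mat_adjoint (paley_bh_mat p)) $$ (r, s) =
      kron (P * mat_adjoint P) (P * mat_adjoint P) $$ (r, s)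
      + kron (P * mat_adjoint J) (P * mat_adjoint I) $$ (r, s)
      + kron (P * mat_adjoint W) (P * mat_adjoint J) $$ (r, s)
      + kron (J * mat_adjoint P) (I * mat_adjoint P) $$ (r, s)
      + kron (J * mat_adjoint J) (I * mat_adjoint I) $$ (r, s)
      + kron (J * mat_adjoint W) (I * mat_adjoint J) $$ (r, s)
      + kron (W * mat_adjoint P) (J * mat_adjoint P) $$ (r, s)
      + kron (W * mat_adjoint J) (J * mat_adjoint I) $$ (r, s)
      + kron (W * mat_adjoint W) (J * mat_adjoint J) $$ (r, s)"
      unfolding H by (rule kron_sum3_gram_entry) (use carriers rs in auto)
    also have "\<dots> = (if r div p = s div p then of_nat p - 1 else -1)
        * (if r mod p = s mod p then of_nat p - 1 else -1)
        + of_nat p * (if r mod p = s mod p then 1 else 0) + (cnj omega + omega)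
        + (if r div p = s div p then 1 else 0) * of_nat p"
      using rs blocks unfolding grams gram_W
      by (simp add: index_kron P_J_I_W_def)
    also have "\<dots> = (of_nat (p * p) \<cdot>\<^sub>m 1\<^sub>m (p * p) :: complex mat) $$ (r, s)"
    proof -
      have "r = s \<longleftrightarrow> r div p = s div p \<and> r mod p = s mod p"
        by (metis div_mult_mod_eq)
      then show ?thesis
        using rs omega_add_cnj by (auto simp: add.commute algebra_simps)
    qed
    finally show "(paley_bh_mat p * mat_adjoint (paley_bh_mat p)) $$ (r, s) =
      (of_nat (p * p) \<cdot>\<^sub>m 1\<^sub>m (p * p) :: complex mat) $$ (r, s)" .
  qed (use paley_bh_carrier[of p] in auto)
qed

theorem theorem1:
  fixes p :: nat
  assumes "prime p" and "odd p"
  shows "butson_hadamard (p^2) 6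
           (kron (paley_mat p) (paley_mat p) + kron (ones_mat p) (1\<^sub>m p)
            + omega \<cdot>\<^sub>m kron (1\<^sub>m p) (ones_mat p))"
proof -
  have entries: "cmod (paley_bh_mat p $$ (r, s)) = 1 \<and> (paley_bh_mat p $$ (r, s)) ^ 6 = 1"
    if "r < p * p" "s < p * p" for r s
    using paley_bh_entry[OF that] omega_pow_6 one_plus_omega_pow_6 power_eq_1_iff[of _ 6]
    by auto
  show ?thesis
    using paley_bh_carrier entries paley_bh_gram[OF assms]
    unfolding butson_hadamard_def complex_hadamard_def paley_bh_mat_def[symmetric]
    by (simp add: power2_eq_square)
qed

end
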